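(* Let $\mathcal A$ be a linearly ordered $\mathbf{UL}_\omega$-algebra and let $B=\{p_1,\dots,p_k\}\subseteq A$. Let $$M=\Big\{\prod_{i=1}^kp_i^{\alpha(i)}:\alpha\in\mathbb N^k\Big\},$$ and for $a\in M$ and $b\in B$ let $(a\mapsto b]=\{c\in M: ac\le b\}$. For every $p\in B$, let $M\Rightarrow p=\{(m\mapsto p]: m\in M\}$. Then: (i) $M\Rightarrow p$ is linearly ordered under set inclusion; (ii) $M\Rightarrow p$ is finite.
   Context: A $\mathbf{UL}$-algebra is a structure $\langle A,\wedge,\vee,\cdot,\to,e,f,\bot,\top\rangle$ such that: - $\langle A,\wedge,\vee,\bot,\top\rangle$ is a bounded lattice; - $\langle A,\cdot,e\rangle$ is a commutative monoid; - $xy\le z$ iff $y\le x\to z$; - for all $x,y,u,v$: $\lambda_u((x\vee y)\to x)\vee\lambda_v((x\vee y)\to y)=e$, where $\lambda_a(b)=(a\to ba)\wedge e$. A $\mathbf{UL}_\omega$-algebra is a $\mathbf{UL}$-algebra satisfying $x\to e=x^2\to e$ for all $x$. This class includes all $\mathbf{IUL}_\omega$-algebras. Powers: $x^0=e$, $x^{n+1}=x^nx$. $\mathbb N=\{0,1,2,\dots\}$, and $\alpha(i)$ is the $i$-th component of $\alpha\in\mathbb N^k$. *)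

theory Defs
  imports Main
begin

text \<open>A UL-algebra on the carrier type 'a: the bounded lattice structure is given by the
type class bounded_lattice (inf, sup, bot, top); the remaining operations are
parameters: multiplication mult, residuum imp, unit e, constant f.\<close>

definition lam :: "('a \<Rightarrow> 'a \<Rightarrow> 'a) \<Rightarrow> ('a \<Rightarrow> 'a \<Rightarrow> 'a) \<Rightarrow> 'a \<Rightarrow> 'a \<Rightarrow> ('a::bounded_lattice) \<Rightarrow> 'a"
  where "lam mult imp e a b = inf (imp a (mult b a)) e"

definition UL_algebra ::
  "('a::bounded_lattice \<Rightarrow> 'a \<Rightarrow> 'a) \<Rightarrow> ('a \<Rightarrow> 'a \<Rightarrow> 'a) \<Rightarrow> 'a \<Rightarrow> 'a \<Rightarrow> bool" where
  "UL_algebra mult imp e f \<longleftrightarrow>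
     (\<forall>x y z. mult (mult x y) z = mult x (mult y z)) \<and>
     (\<forall>x y. mult x y = mult y x) \<and>
     (\<forall>x. mult e x = x) \<and>
     (\<forall>x y z. mult x y \<le> z \<longleftrightarrow> y \<le> imp x z) \<and>
     (\<forall>x y u v. sup (lam mult imp e u (imp (sup x y) x))
                      (lam mult imp e v (imp (sup x y) y)) = e)"

definition UL_omega_algebra ::
  "('a::bounded_lattice \<Rightarrow> 'a \<Rightarrow> 'a) \<Rightarrow> ('a \<Rightarrow> 'a \<Rightarrow> 'a) \<Rightarrow> 'a \<Rightarrow> 'a \<Rightarrow> bool" where
  "UL_omega_algebra mult imp e f \<longleftrightarrow>
     UL_algebra mult imp e f \<and> (\<forall>x. imp x e = imp (mult x x) e)"

fun upow :: "('a \<Rightarrow> 'a \<Rightarrow> 'a) \<Rightarrow> 'a \<Rightarrow> 'a \<Rightarrow> nat \<Rightarrow> 'a" where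
  "upow mult e x 0 = e"
| "upow mult e x (Suc n) = mult (upow mult e x n) x"

fun mprod :: "('a \<Rightarrow> 'a \<Rightarrow> 'a) \<Rightarrow> 'a \<Rightarrow> (nat \<Rightarrow> 'a) \<Rightarrow> (nat \<Rightarrow> nat) \<Rightarrow> nat \<Rightarrow> 'a" where
  "mprod mult e p \<alpha> 0 = e"
| "mprod mult e p \<alpha> (Suc i) = mult (mprod mult e p \<alpha> i) (upow mult e (p (Suc i)) (\<alpha> (Suc i)))"

definition Mset :: "('a \<Rightarrow> 'a \<Rightarrow> 'a) \<Rightarrow> 'a \<Rightarrow> (nat \<Rightarrow> 'a) \<Rightarrow> nat \<Rightarrow> 'a set" where
  "Mset mult e p k = {mprod mult e p \<alpha> k | \<alpha>. True}"

definition downset :: "('a::order \<Rightarrow> 'a \<Rightarrow> 'a) \<Rightarrow> 'a set \<Rightarrow> 'a \<Rightarrow> 'a \<Rightarrow> 'a set" where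
  "downset mult M a b = {c \<in> M. mult a c \<le> b}"

definition Mimp :: "('a::order \<Rightarrow> 'a \<Rightarrow> 'a) \<Rightarrow> 'a set \<Rightarrow> 'a \<Rightarrow> 'a set set" where
  "Mimp mult M q = {downset mult M m q | m. m \<in> M}"

end

theory Submission
  imports Defs Complex_Main
begin

text \<open>
  Whether \<open>m \<le> q\<close> holds for \<open>m = p\<^sub>1\<^bsup>\<gamma>(1)\<^esup> \<cdots> p\<^sub>k\<^bsup>\<gamma>(k)\<^esup>\<close> depends on each exponent
  \<open>\<gamma>(i)\<close> only up to some bound \<open>N\<close>. Otherwise there are infinitely many exponent vectors \<open>\<gamma>\<close>
  with arbitrarily large \<open>\<gamma>(i)\<close> at which multiplying by \<open>s = p\<^sub>i\<close> flips the truth of \<open>m \<le> q\<close>;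
  by Dickson's lemma two of them, \<open>\<gamma> \<le> \<gamma>'\<close>, differ by at least \<open>2\<close> in coordinate \<open>i\<close>, so the
  corresponding products are \<open>a\<close> and \<open>a y s\<^sup>2\<close>. In a chain, \<open>x \<rightarrow> e = x\<^sup>2 \<rightarrow> e\<close> forces
  \<open>y s\<close> and \<open>y s\<^sup>3\<close> to lie on the same side of \<open>e\<close>, which rules out the second flip.
  Hence every \<open>(m \<mapsto> q]\<close> equals \<open>(m' \<mapsto> q]\<close> for an \<open>m'\<close> with exponents bounded by \<open>N\<close>, so there
  are finitely many. Linearity of \<open>M \<Rightarrow> q\<close> is just antitonicity of \<open>(m \<mapsto> q]\<close> in \<open>m\<close>.
\<close>

lemma nat_seq_monotone_subseq:
  fixes s :: "nat \<Rightarrow> nat"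
  obtains r :: "nat \<Rightarrow> nat" where "strict_mono r" "\<And>m n. m \<le> n \<Longrightarrow> s (r m) \<le> s (r n)"
proof -
  obtain f where f: "strict_mono f" "monoseq (\<lambda>n. s (f n))"
    using seq_monosub by blast
  show thesis
  proof (cases "\<forall>m n. m \<le> n \<longrightarrow> s (f m) \<le> s (f n)")
    case True
    then show thesis using f(1) that by blast
  next
    case False
    then have decreasing: "m \<le> n \<Longrightarrow> s (f n) \<le> s (f m)" for m n
      using f(2) unfolding monoseq_def by blast
    define v where "v = (LEAST v. \<exists>n. s (f n) = v)"
    obtain n0 where n0: "s (f n0) = v"
      using LeastI_ex[of "\<lambda>v. \<exists>n. s (f n) = v"] unfolding v_def by blast
    have "s (f (n + n0)) = v" for n
      using decreasing[of n0 "n + n0"] n0 Least_le[of "\<lambda>v. \<exists>n. s (f n) = v"]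
      unfolding v_def by (metis (mono_tags) le_add2 le_antisym)
    moreover have "strict_mono (\<lambda>n. f (n + n0))"
      using f(1) unfolding strict_mono_def by simp
    ultimately show thesis using that[of "\<lambda>n. f (n + n0)"] by simp
  qed
qed

lemma dickson_subseq:
  fixes g :: "nat \<Rightarrow> 'i \<Rightarrow> nat"
  assumes "finite I"
  obtains r :: "nat \<Rightarrow> nat"
  where "strict_mono r" "\<And>l m n. l \<in> I \<Longrightarrow> m \<le> n \<Longrightarrow> g (r m) l \<le> g (r n) l"
  using assms
proof (induction I arbitrary: thesis rule: finite_induct)
  case empty
  show ?case using empty(1)[of "id :: nat \<Rightarrow> nat"] by (simp add: strict_mono_def)
next
  case (insert l I)
  obtain r :: "nat \<Rightarrow> nat" where r: "strict_mono r" "\<And>l m n. l \<in> I \<Longrightarrow> m \<le> n \<Longrightarrow> g (r m) l \<le> g (r n) l"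
    by (rule insert.IH) (rule that)
  obtain r' :: "nat \<Rightarrow> nat" where r': "strict_mono r'" "\<And>m n. m \<le> n \<Longrightarrow> g (r (r' m)) l \<le> g (r (r' n)) l"
    by (rule nat_seq_monotone_subseq[of "\<lambda>n. g (r n) l"]) (rule that)
  show ?case
  proof (rule insert.prems)
    show "strict_mono (r \<circ> r')"
      using r(1) r'(1) by (simp add: strict_mono_def)
    fix l' and m n :: nat
    assume "l' \<in> insert l I" "m \<le> n"
    then consider "l' = l" | "l' \<in> I" "r' m \<le> r' n"
      using strict_mono_less_eq[OF r'(1)] by blast
    then show "g ((r \<circ> r') m) l' \<le> g ((r \<circ> r') n) l'"
      using r(2) r'(2)[OF \<open>m \<le> n\<close>] by cases auto
  qed
qed

locale linear_ul_omega =
  fixes mult :: "'a::bounded_lattice \<Rightarrow> 'a \<Rightarrow> 'a" and imp :: "'a \<Rightarrow> 'a \<Rightarrow> 'a" and e :: 'a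
  assumes assoc: "mult (mult x y) z = mult x (mult y z)"
    and commute: "mult x y = mult y x"
    and left_unit: "mult e x = x"
    and residuation: "mult x y \<le> z \<longleftrightarrow> y \<le> imp x z"
    and linear: "x \<le> y \<or> y \<le> x"
    and imp_e_square: "imp x e = imp (mult x x) e"
begin

lemma left_commute: "mult x (mult y z) = mult y (mult x z)"
  by (metis assoc commute)

lemma right_unit: "mult x e = x"
  using left_unit commute by metis

lemma mult_right_mono: "x \<le> y \<Longrightarrow> mult z x \<le> mult z y"
  by (metis order_trans residuation order_refl)

lemma mult_left_mono: "x \<le> y \<Longrightarrow> mult x z \<le> mult y z"
  using mult_right_mono commute by metis

lemma le_e_iff_square: "mult y s \<le> e \<longleftrightarrow> mult y (mult s s) \<le> e"
proof -
  have "mult y s \<le> e \<longleftrightarrow> y \<le> imp s e" by (simp add: residuation flip: commute)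
  also have "\<dots> \<longleftrightarrow> y \<le> imp (mult s s) e" by (simp flip: imp_e_square)
  also have "\<dots> \<longleftrightarrow> mult y (mult s s) \<le> e" by (metis residuation commute)
  finally show ?thesis .
qed

lemma le_e_iff_cube: "mult y s \<le> e \<longleftrightarrow> mult y (mult s (mult s s)) \<le> e"
  using le_e_iff_square[of y s] le_e_iff_square[of "mult y s" s] by (simp add: assoc)

text \<open>
  For \<open>s \<le> e\<close> both flips would go downwards (\<open>a s \<le> q < a\<close>, \<open>b s \<le> q < b\<close>), yet \<open>b \<le> a s\<close> if
  \<open>y s \<le> e\<close> and \<open>a \<le> b s\<close> otherwise, since \<open>y s\<^sup>3\<close> lies on the same side of \<open>e\<close> as \<open>y s\<close>.
  The case \<open>e \<le> s\<close> is dual.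
\<close>

lemma below_flip_not_repeated:
  assumes flip: "\<not> (mult a s \<le> q \<longleftrightarrow> a \<le> q)"
    and b: "b = mult a (mult y (mult s s))"
  shows "mult b s \<le> q \<longleftrightarrow> b \<le> q"
proof -
  have b_as: "b = mult (mult a s) (mult y s)" and bs_a: "mult b s = mult a (mult y (mult s (mult s s)))"
    unfolding b by (metis assoc left_commute)+
  have mult_e_le: "mult x z \<le> x" if "z \<le> e" for x z
    using mult_right_mono[OF that, of x] by (simp add: right_unit)
  have le_mult_e: "x \<le> mult x z" if "e \<le> z" for x z
    using mult_right_mono[OF that, of x] by (simp add: right_unit)
  show ?thesis
  proof (cases "s \<le> e")
    case True
    then have "mult a s \<le> q" "\<not> a \<le> q" "mult b s \<le> b"
      using flip mult_e_le order_trans by blast+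
    moreover have "b \<le> mult a s" if "mult y s \<le> e"
      using mult_e_le[OF that] b_as by simp
    moreover have "a \<le> mult b s" if "\<not> mult y s \<le> e"
      using that le_e_iff_cube linear le_mult_e bs_a by metis
    ultimately show ?thesis
      using order_trans by blast
  next
    case False
    then have "e \<le> s" using linear by blast
    then have "a \<le> q" "\<not> mult a s \<le> q" "b \<le> mult b s"
      using flip le_mult_e order_trans by blast+
    moreover have "mult b s \<le> a" if "mult y s \<le> e"
      using that le_e_iff_cube mult_e_le bs_a by metis
    moreover have "mult a s \<le> b" if "\<not> mult y s \<le> e"
      using that linear le_mult_e b_as by metis
    ultimately show ?thesis
      using order_trans by blast
  qed
qed

lemma upow_add: "upow mult e x (m + n) = mult (upow mult e x m) (upow mult e x n)"
  by (induction n) (simp_all add: right_unit assoc)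

lemma mprod_add:
  "mprod mult e p (\<lambda>i. \<alpha> i + \<beta> i) n = mult (mprod mult e p \<alpha> n) (mprod mult e p \<beta> n)"
  by (induction n) (simp_all add: left_unit upow_add assoc commute left_commute)

lemma mprod_cong:
  "(\<And>i. i \<in> {1..n} \<Longrightarrow> \<alpha> i = \<beta> i) \<Longrightarrow> mprod mult e p \<alpha> n = mprod mult e p \<beta> n"
  by (induction n) auto

lemma mprod_Suc_exponent:
  "mprod mult e p (\<gamma>(i := Suc (\<gamma> i))) n
     = mult (mprod mult e p \<gamma> n) (mprod mult e p (\<lambda>l. of_bool (l = i)) n)"
proof -
  have "\<gamma>(i := Suc (\<gamma> i)) = (\<lambda>l. \<gamma> l + of_bool (l = i))" by auto
  then show ?thesis by (simp only: mprod_add)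
qed

lemma mprod_dominating_exponent:
  fixes p :: "nat \<Rightarrow> 'a"
  assumes "\<And>l. l \<in> {1..n} \<Longrightarrow> \<gamma> l \<le> \<gamma>' l" and "\<gamma> i + 2 \<le> \<gamma>' i"
  defines "s \<equiv> mprod mult e p (\<lambda>l. of_bool (l = i)) n"
  obtains y where "mprod mult e p \<gamma>' n = mult (mprod mult e p \<gamma> n) (mult y (mult s s))"
proof
  define \<delta> where "\<delta> l = \<gamma>' l - \<gamma> l - 2 * of_bool (l = i)" for l
  have "mprod mult e p \<gamma>' n
          = mprod mult e p (\<lambda>l. \<gamma> l + (\<delta> l + (of_bool (l = i) + of_bool (l = i)))) n"
    by (rule mprod_cong) (use assms(1,2) in \<open>auto simp: \<delta>_def\<close>)
  also have "\<dots> = mult (mprod mult e p \<gamma> n) (mult (mprod mult e p \<delta> n) (mult s s))"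
    unfolding s_def by (simp only: mprod_add)
  finally show "mprod mult e p \<gamma>' n = mult (mprod mult e p \<gamma> n) (mult (mprod mult e p \<delta> n) (mult s s))" .
qed

context
  fixes p :: "nat \<Rightarrow> 'a" and k :: nat and q :: 'a
begin

abbreviation below :: "(nat \<Rightarrow> nat) \<Rightarrow> bool"
  where "below \<gamma> \<equiv> mprod mult e p \<gamma> k \<le> q"

lemma below_stable_in_exponent:
  assumes "i \<in> {1..k}"
  shows "\<exists>N. \<forall>\<gamma>. N \<le> \<gamma> i \<longrightarrow> (below (\<gamma>(i := Suc (\<gamma> i))) \<longleftrightarrow> below \<gamma>)"
proof (rule ccontr)
  assume "\<not> ?thesis"
  then obtain G where G_large: "\<And>N. N \<le> G N i"
    and G_flip: "\<And>N. \<not> (below ((G N)(i := Suc (G N i))) \<longleftrightarrow> below (G N))"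
    by metis
  obtain r :: "nat \<Rightarrow> nat" where r: "strict_mono r" "\<And>l m n. l \<in> {1..k} \<Longrightarrow> m \<le> n \<Longrightarrow> G (r m) l \<le> G (r n) l"
    using dickson_subseq[of "{1..k}" G] by blast
  define j where "j = G (r 0) i + 2"
  define s where "s = mprod mult e p (\<lambda>l. of_bool (l = i)) k"
  have "j \<le> G (r j) i"
    using G_large[of "r j"] seq_suble[OF r(1), of j] by linarith
  then obtain y where y: "mprod mult e p (G (r j)) k = mult (mprod mult e p (G (r 0)) k) (mult y (mult s s))"
    using mprod_dominating_exponent[of k "G (r 0)" "G (r j)" i p] r(2)[of _ 0 j] j_def s_def by auto
  show False
    using below_flip_not_repeated[OF G_flip[of "r 0", unfolded mprod_Suc_exponent, folded s_def] y]
      G_flip[of "r j", unfolded mprod_Suc_exponent, folded s_def] by blast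
qed

lemma below_stable_uniform:
  obtains N where "\<And>i \<gamma>. i \<in> {1..k} \<Longrightarrow> N \<le> \<gamma> i \<Longrightarrow> below (\<gamma>(i := Suc (\<gamma> i))) \<longleftrightarrow> below \<gamma>"
proof -
  obtain Ni where Ni: "\<And>i \<gamma>. i \<in> {1..k} \<Longrightarrow> Ni i \<le> \<gamma> i \<Longrightarrow> below (\<gamma>(i := Suc (\<gamma> i))) \<longleftrightarrow> below \<gamma>"
    using below_stable_in_exponent by metis
  have "i \<in> {1..k} \<Longrightarrow> Ni i \<le> sum Ni {1..k}" for i
    by (rule member_le_sum) auto
  then show thesis
    using that[of "sum Ni {1..k}"] Ni le_trans by blast
qed

context
  fixes N :: nat
  assumes stable: "\<And>i \<gamma>. i \<in> {1..k} \<Longrightarrow> N \<le> \<gamma> i \<Longrightarrow> below (\<gamma>(i := Suc (\<gamma> i))) \<longleftrightarrow> below \<gamma>"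
begin

lemma below_lower_exponent:
  assumes i: "i \<in> {1..k}" and "N \<le> \<gamma> i"
  shows "below (\<gamma>(i := N)) \<longleftrightarrow> below \<gamma>"
proof -
  have "below (\<gamma>(i := N + d)) \<longleftrightarrow> below (\<gamma>(i := N))" for d
  proof (induction d)
    case (Suc d)
    have "below (\<gamma>(i := N + Suc d)) \<longleftrightarrow> below (\<gamma>(i := N + d))"
      using stable[OF i, of "\<gamma>(i := N + d)"] by (metis fun_upd_same fun_upd_upd add_Suc_right le_add1)
    then show ?case using Suc.IH by blast
  qed simp
  from this[of "\<gamma> i - N"] show ?thesis using \<open>N \<le> \<gamma> i\<close> by simp
qed

lemma below_min_exponents: "below (\<lambda>l. min (\<gamma> l) N) \<longleftrightarrow> below \<gamma>"
proof -
  define cap where "cap n l = (if l \<in> {1..n} then min (\<gamma> l) N else \<gamma> l)" for n l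
  have cap_below: "n \<le> k \<Longrightarrow> below (cap n) \<longleftrightarrow> below \<gamma>" for n
  proof (induction n)
    case 0
    then show ?case by (simp add: cap_def)
  next
    case (Suc n)
    have "cap (Suc n) = (cap n)(Suc n := min (cap n (Suc n)) N)"
      by (auto simp: cap_def)
    moreover have "below ((cap n)(Suc n := min (cap n (Suc n)) N)) \<longleftrightarrow> below (cap n)"
      using below_lower_exponent[of "Suc n" "cap n"] Suc.prems
      by (cases "N \<le> cap n (Suc n)") (auto simp: min_def)
    ultimately show ?case
      using Suc.IH[OF Suc_leD[OF Suc.prems]] by (simp only:)
  qed
  have "mprod mult e p (cap k) k = mprod mult e p (\<lambda>l. min (\<gamma> l) N) k"
    by (rule mprod_cong) (simp add: cap_def)
  then show ?thesis
    using cap_below[OF order_refl] by simp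
qed

lemma Mimp_finite_if_stable: "finite (Mimp mult (Mset mult e p k) q)"
proof -
  define D where "D \<beta> = downset mult (Mset mult e p k) (mprod mult e p \<beta> k) q" for \<beta>
  define cap where "cap \<beta> l = (if l \<in> {1..k} then min (\<beta> l) N else 0)" for \<beta> l
  define Caps where "Caps = {f. \<forall>l. (l \<in> {1..k} \<longrightarrow> f l \<in> {0..N}) \<and> (l \<notin> {1..k} \<longrightarrow> f l = 0)}"
  have "D \<beta> = D (cap \<beta>)" for \<beta>
  proof -
    have "mult (mprod mult e p \<beta> k) (mprod mult e p \<alpha> k) \<le> q
            \<longleftrightarrow> mult (mprod mult e p (cap \<beta>) k) (mprod mult e p \<alpha> k) \<le> q" for \<alpha>
    proof -
      have "mprod mult e p (\<lambda>l. min (\<beta> l + \<alpha> l) N) k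
              = mprod mult e p (\<lambda>l. min (cap \<beta> l + \<alpha> l) N) k"
        by (rule mprod_cong) (simp add: cap_def)
      then have "below (\<lambda>l. \<beta> l + \<alpha> l) \<longleftrightarrow> below (\<lambda>l. cap \<beta> l + \<alpha> l)"
        using below_min_exponents[of "\<lambda>l. \<beta> l + \<alpha> l"] below_min_exponents[of "\<lambda>l. cap \<beta> l + \<alpha> l"]
        by simp
      then show ?thesis by (simp only: mprod_add)
    qed
    then show ?thesis
      unfolding D_def downset_def Mset_def by blast
  qed
  moreover have "cap \<beta> \<in> Caps" for \<beta>
    by (simp add: cap_def Caps_def)
  ultimately have "D \<beta> \<in> D ` Caps" for \<beta>
    by (metis image_eqI)
  moreover have "Mimp mult (Mset mult e p k) q \<subseteq> range D"
    unfolding Mimp_def Mset_def D_def by auto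
  ultimately have "Mimp mult (Mset mult e p k) q \<subseteq> D ` Caps"
    by blast
  moreover have "finite Caps"
    unfolding Caps_def by (rule finite_set_of_finite_funs) auto
  ultimately show ?thesis
    using finite_subset by blast
qed

end

end

lemma downset_antimono:
  assumes "m \<le> m'"
  shows "downset mult M m' q \<subseteq> downset mult M m q"
  unfolding downset_def by (auto intro: order_trans[OF mult_left_mono[OF assms]])

lemma Mimp_chain:
  assumes "X \<in> Mimp mult M q" and "Y \<in> Mimp mult M q"
  shows "X \<subseteq> Y \<or> Y \<subseteq> X"
proof -
  obtain m m' where "X = downset mult M m q" "Y = downset mult M m' q"
    using assms unfolding Mimp_def by blast
  then show ?thesis
    using linear[of m m'] downset_antimono by metis
qed

end

theorem lemma4p7:
  fixes mult imp :: "'a::bounded_lattice \<Rightarrow> 'a \<Rightarrow> 'a"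
    and e f :: 'a
    and p :: "nat \<Rightarrow> 'a"
    and k :: nat
    and q :: 'a
  assumes "UL_omega_algebra mult imp e f"
    and "\<forall>x y::'a. x \<le> y \<or> y \<le> x"
    and "q \<in> p ` {1..k}"
  shows "(\<forall>X \<in> Mimp mult (Mset mult e p k) q. \<forall>Y \<in> Mimp mult (Mset mult e p k) q.
            X \<subseteq> Y \<or> Y \<subseteq> X)
         \<and> finite (Mimp mult (Mset mult e p k) q)"
proof -
  interpret linear_ul_omega mult imp e
    using assms(1,2) unfolding UL_omega_algebra_def UL_algebra_def
    by unfold_locales blast+
  obtain N where "\<And>i \<gamma>. i \<in> {1..k} \<Longrightarrow> N \<le> \<gamma> i \<Longrightarrow>
      mprod mult e p (\<gamma>(i := Suc (\<gamma> i))) k \<le> q \<longleftrightarrow> mprod mult e p \<gamma> k \<le> q"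
    by (rule below_stable_uniform[where p = p and k = k and q = q]) (rule that)
  then have "finite (Mimp mult (Mset mult e p k) q)"
    by (rule Mimp_finite_if_stable)
  then show ?thesis
    using Mimp_chain by blast
qed

end
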